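(* Let $Q$ be a quiver, $\theta\in\mathbb{Z}^{Q_0}$, and $\mathbf{l},\mathbf{u}\in\mathbb{Z}_{\ge0}^{Q_1}$. Then there exist a quiver $Q'$ with no oriented cycles and a weight $\theta'\in\mathbb{Z}^{Q'_0}$ such that the flow polytope $\nabla(Q,\theta,\mathbf{l},\mathbf{u})$ and the quiver polytope $\nabla(Q',\theta')$ are integral-affinely equivalent.
   Context: A quiver $Q$: vertices $Q_0$, arrows $Q_1$, $a$ from $a^-$ to $a^+$. The flow polytope is $\nabla(Q,\theta,\mathbf{l},\mathbf{u})=\{x\in\mathbb{R}^{Q_1}\mid \mathbf{l}\le x\le\mathbf{u},\ \forall v\in Q_0:\ \theta(v)=\sum_{a^+=v}x(a)-\sum_{a^-=v}x(a)\}$ and $\nabla(Q',\theta')=\{x\in\mathbb{R}^{Q'_1}\mid 0\le x,\ \forall v\in Q'_0:\ \theta'(v)=\sum_{a^+=v}x(a)-\sum_{a^-=v}x(a)\}$. Lattice polyhedra $\nabla_i\subset V_i$ with lattices $M_i\subset V_i$ (here $\mathbb{Z}^{Q_1}$ and $\mathbb{Z}^{Q'_1}$) are integral-affinely equivalent if there is an affine linear isomorphism $\varphi:\mathrm{AffSpan}(\nabla_1)\to\mathrm{AffSpan}(\nabla_2)$ mapping $\mathrm{AffSpan}(\nabla_1)\cap M_1$ onto $\mathrm{AffSpan}(\nabla_2)\cap M_2$ and $\nabla_1$ onto $\nabla_2$. *)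

theory Defs
  imports Complex_Main
begin

definition quiver :: "'v set \<Rightarrow> 'a set \<Rightarrow> ('a \<Rightarrow> 'v) \<Rightarrow> ('a \<Rightarrow> 'v) \<Rightarrow> bool" where
  "quiver V A s t \<longleftrightarrow> finite V \<and> finite A \<and> (\<forall>a\<in>A. s a \<in> V \<and> t a \<in> V)"

definition no_oriented_cycles :: "'a set \<Rightarrow> ('a \<Rightarrow> 'v) \<Rightarrow> ('a \<Rightarrow> 'v) \<Rightarrow> bool" where
  "no_oriented_cycles A s t \<longleftrightarrow> acyclic {(s a, t a) | a. a \<in> A}"

text \<open>Points of R^{Q_1} are functions on arrows vanishing outside A.\<close>
definition flow_polytope ::
  "'v set \<Rightarrow> 'a set \<Rightarrow> ('a \<Rightarrow> 'v) \<Rightarrow> ('a \<Rightarrow> 'v) \<Rightarrow> ('v \<Rightarrow> int) \<Rightarrow> ('a \<Rightarrow> int) \<Rightarrow> ('a \<Rightarrow> int)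
     \<Rightarrow> ('a \<Rightarrow> real) set" where
  "flow_polytope V A s t \<theta> l u = {x. (\<forall>a. a \<notin> A \<longrightarrow> x a = 0)
      \<and> (\<forall>a\<in>A. real_of_int (l a) \<le> x a \<and> x a \<le> real_of_int (u a))
      \<and> (\<forall>v\<in>V. real_of_int (\<theta> v) = (\<Sum>a\<in>{a\<in>A. t a = v}. x a) - (\<Sum>a\<in>{a\<in>A. s a = v}. x a))}"

definition quiver_polytope ::
  "'v set \<Rightarrow> 'a set \<Rightarrow> ('a \<Rightarrow> 'v) \<Rightarrow> ('a \<Rightarrow> 'v) \<Rightarrow> ('v \<Rightarrow> int) \<Rightarrow> ('a \<Rightarrow> real) set" where
  "quiver_polytope V A s t \<theta> = {x. (\<forall>a. a \<notin> A \<longrightarrow> x a = 0)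
      \<and> (\<forall>a\<in>A. 0 \<le> x a)
      \<and> (\<forall>v\<in>V. real_of_int (\<theta> v) = (\<Sum>a\<in>{a\<in>A. t a = v}. x a) - (\<Sum>a\<in>{a\<in>A. s a = v}. x a))}"

text \<open>Integer lattice points (combined with the affine span, which vanishes outside the arrows,
  this is the lattice Z^{Q_1}).\<close>
definition int_points :: "('a \<Rightarrow> real) set" where
  "int_points = {x. \<forall>a. x a \<in> \<int>}"

definition aff_span :: "('a \<Rightarrow> real) set \<Rightarrow> ('a \<Rightarrow> real) set" where
  "aff_span S = {y. \<exists>T c. finite T \<and> T \<subseteq> S \<and> sum c T = 1 \<and> y = (\<lambda>a. \<Sum>x\<in>T. c x * x a)}"

definition affine_on :: "('a \<Rightarrow> real) set \<Rightarrow> (('a \<Rightarrow> real) \<Rightarrow> ('b \<Rightarrow> real)) \<Rightarrow> bool" where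
  "affine_on S \<phi> \<longleftrightarrow> (\<forall>T c. finite T \<and> T \<subseteq> S \<and> sum c T = 1 \<longrightarrow>
      \<phi> (\<lambda>a. \<Sum>x\<in>T. c x * x a) = (\<lambda>b. \<Sum>x\<in>T. c x * \<phi> x b))"

definition integral_affinely_equivalent :: "('a \<Rightarrow> real) set \<Rightarrow> ('b \<Rightarrow> real) set \<Rightarrow> bool" where
  "integral_affinely_equivalent P1 P2 \<longleftrightarrow> (\<exists>\<phi>.
      affine_on (aff_span P1) \<phi>
    \<and> bij_betw \<phi> (aff_span P1) (aff_span P2)
    \<and> \<phi> ` (aff_span P1 \<inter> int_points) = aff_span P2 \<inter> int_points
    \<and> \<phi> ` P1 = P2)"

end

theory Submission
  imports Defs
begin

(* Subdivide every arrow a : v \<rightarrow> w of Q by a new vertex m_a, replacing a by the arrows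
   m_a \<rightarrow> w and m_a \<rightarrow> v. A flow x with l \<le> x \<le> u corresponds to the nonnegative flow
   x a - l a on the first and u a - x a on the second new arrow: the weight l a - u a at m_a
   forces their sum to be u a - l a, and the weights of the old vertices absorb the constants.
   Every new arrow runs from a new vertex to an old one, so there are no oriented cycles.
   The correspondence changes each coordinate by an integral affine function with an integral
   affine inverse, hence is an integral-affine equivalence; it remains to rename vertices and
   arrows by natural numbers. *)

lemma aff_span_superset: "S \<subseteq> aff_span S"
proof
  fix x assume "x \<in> S"
  then show "x \<in> aff_span S"
    unfolding aff_span_def by (intro CollectI exI[of _ "{x}"] exI[of _ "\<lambda>_. 1"]) auto
qed

lemma aff_span_vanishing:
  assumes "S \<subseteq> {x. \<forall>a. a \<notin> A \<longrightarrow> x a = 0}"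
  shows "aff_span S \<subseteq> {x. \<forall>a. a \<notin> A \<longrightarrow> x a = 0}"
proof
  fix y assume "y \<in> aff_span S"
  then obtain T c where "T \<subseteq> S" "y = (\<lambda>a. \<Sum>x\<in>T. c x * x a)"
    unfolding aff_span_def by blast
  with assms show "y \<in> {x. \<forall>a. a \<notin> A \<longrightarrow> x a = 0}"
    by (auto intro!: sum.neutral)
qed

lemma affine_combination_reindex:
  fixes \<phi> :: "'x \<Rightarrow> 'b \<Rightarrow> real" and c :: "'x \<Rightarrow> real"
  assumes "inj_on \<phi> T"
  shows "sum (\<lambda>y. c (inv_into T \<phi> y)) (\<phi> ` T) = sum c T"
    and "(\<lambda>b. \<Sum>x\<in>T. c x * \<phi> x b) = (\<lambda>b. \<Sum>y\<in>\<phi> ` T. c (inv_into T \<phi> y) * y b)"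
  using assms by (simp_all add: sum.reindex)

lemma affine_on_subset: "affine_on S \<phi> \<Longrightarrow> T \<subseteq> S \<Longrightarrow> affine_on T \<phi>"
  unfolding affine_on_def by (meson order_trans)

lemma affine_on_comp:
  assumes "affine_on S \<phi>" "inj_on \<phi> S" "\<phi> ` S \<subseteq> S'" "affine_on S' \<psi>"
  shows "affine_on S (\<psi> \<circ> \<phi>)"
  unfolding affine_on_def
proof (intro allI impI)
  fix T and c :: "_ \<Rightarrow> real" assume T: "finite T \<and> T \<subseteq> S \<and> sum c T = 1"
  have inj: "inj_on \<phi> T" using assms(2) T inj_on_subset by blast
  have \<phi>_comb: "\<phi> (\<lambda>a. \<Sum>x\<in>T. c x * x a) = (\<lambda>b. \<Sum>y\<in>\<phi> ` T. c (inv_into T \<phi> y) * y b)"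
    using assms(1) T affine_combination_reindex(2)[OF inj] unfolding affine_on_def by simp
  have "\<psi> (\<phi> (\<lambda>a. \<Sum>x\<in>T. c x * x a)) = (\<lambda>b. \<Sum>y\<in>\<phi> ` T. c (inv_into T \<phi> y) * \<psi> y b)"
  proof -
    have "\<phi> ` T \<subseteq> S'" using assms(3) T by blast
    moreover have "sum (\<lambda>y. c (inv_into T \<phi> y)) (\<phi> ` T) = 1"
      using T affine_combination_reindex(1)[OF inj] by simp
    ultimately show ?thesis
      unfolding \<phi>_comb using assms(4) T unfolding affine_on_def by (simp del: sum.reindex)
  qed
  also have "\<dots> = (\<lambda>b. \<Sum>x\<in>T. c x * \<psi> (\<phi> x) b)"
    using inj by (simp add: sum.reindex)
  finally show "(\<psi> \<circ> \<phi>) (\<lambda>a. \<Sum>x\<in>T. c x * x a) = (\<lambda>b. \<Sum>x\<in>T. c x * (\<psi> \<circ> \<phi>) x b)"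
    by simp
qed

lemma aff_span_image:
  assumes "affine_on S \<phi>" "inj_on \<phi> S"
  shows "aff_span (\<phi> ` S) = \<phi> ` aff_span S"
proof
  show "aff_span (\<phi> ` S) \<subseteq> \<phi> ` aff_span S"
  proof
    fix y assume "y \<in> aff_span (\<phi> ` S)"
    then obtain T c where T: "finite T" "T \<subseteq> \<phi> ` S" "sum c T = 1" "y = (\<lambda>a. \<Sum>x\<in>T. c x * x a)"
      unfolding aff_span_def by blast
    obtain C where C: "C \<subseteq> S" "finite C" "T = \<phi> ` C"
      using finite_subset_image[OF T(1,2)] by blast
    have inj: "inj_on \<phi> C" using assms(2) C(1) inj_on_subset by blast
    have sum1: "sum (c \<circ> \<phi>) C = 1" using T(3) C(3) inj by (simp add: sum.reindex)
    have "y = (\<lambda>b. \<Sum>x\<in>C. (c \<circ> \<phi>) x * \<phi> x b)"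
      using T(4) C(3) inj by (simp add: sum.reindex)
    also have "\<dots> = \<phi> (\<lambda>a. \<Sum>x\<in>C. (c \<circ> \<phi>) x * x a)"
      using assms(1) C sum1 unfolding affine_on_def by simp
    finally show "y \<in> \<phi> ` aff_span S" unfolding aff_span_def using C sum1 by blast
  qed
next
  show "\<phi> ` aff_span S \<subseteq> aff_span (\<phi> ` S)"
  proof
    fix y assume "y \<in> \<phi> ` aff_span S"
    then obtain T c where T: "finite T" "T \<subseteq> S" "sum c T = 1" "y = \<phi> (\<lambda>a. \<Sum>x\<in>T. c x * x a)"
      unfolding aff_span_def by blast
    have inj: "inj_on \<phi> T" using assms(2) T(2) inj_on_subset by blast
    have "y = (\<lambda>b. \<Sum>x\<in>T. c x * \<phi> x b)"
      using assms(1) T unfolding affine_on_def by simp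
    then show "y \<in> aff_span (\<phi> ` S)"
      using T affine_combination_reindex[OF inj, of c] unfolding aff_span_def
      by (intro CollectI exI[of _ "\<phi> ` T"] exI[of _ "\<lambda>y. c (inv_into T \<phi> y)"]) auto
  qed
qed

lemma integral_affinely_equivalent_trans:
  assumes "integral_affinely_equivalent P Q" "integral_affinely_equivalent Q R"
  shows "integral_affinely_equivalent P R"
proof -
  obtain \<phi> where \<phi>: "affine_on (aff_span P) \<phi>" "bij_betw \<phi> (aff_span P) (aff_span Q)"
    "\<phi> ` (aff_span P \<inter> int_points) = aff_span Q \<inter> int_points" "\<phi> ` P = Q"
    using assms(1) unfolding integral_affinely_equivalent_def by blast
  obtain \<psi> where \<psi>: "affine_on (aff_span Q) \<psi>" "bij_betw \<psi> (aff_span Q) (aff_span R)"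
    "\<psi> ` (aff_span Q \<inter> int_points) = aff_span R \<inter> int_points" "\<psi> ` Q = R"
    using assms(2) unfolding integral_affinely_equivalent_def by blast
  have "affine_on (aff_span P) (\<psi> \<circ> \<phi>)"
    using \<phi>(1,2) \<psi>(1) by (intro affine_on_comp) (auto simp: bij_betw_def)
  moreover have "bij_betw (\<psi> \<circ> \<phi>) (aff_span P) (aff_span R)"
    using \<phi>(2) \<psi>(2) by (rule bij_betw_trans)
  moreover have "(\<psi> \<circ> \<phi>) ` (aff_span P \<inter> int_points) = aff_span R \<inter> int_points"
    unfolding image_comp[symmetric] \<phi>(3) \<psi>(3) ..
  moreover have "(\<psi> \<circ> \<phi>) ` P = R"
    unfolding image_comp[symmetric] \<phi>(4) \<psi>(4) ..
  ultimately show ?thesis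
    unfolding integral_affinely_equivalent_def by blast
qed

lemma integral_affinely_equivalentI:
  assumes affine: "affine_on (aff_span P) \<phi>"
    and vanishing: "P \<subseteq> {x. \<forall>a. a \<notin> A \<longrightarrow> x a = 0}"
    and inverse: "\<And>x. \<forall>a. a \<notin> A \<longrightarrow> x a = 0 \<Longrightarrow> \<psi> (\<phi> x) = x"
    and integral: "\<phi> ` int_points \<subseteq> int_points" "\<psi> ` int_points \<subseteq> int_points"
    and image: "\<phi> ` P = Q"
  shows "integral_affinely_equivalent P Q"
proof -
  have inverse': "\<psi> (\<phi> x) = x" if "x \<in> aff_span P" for x
    using aff_span_vanishing[OF vanishing] that by (intro inverse) blast
  have inj: "inj_on \<phi> (aff_span P)"
    by (rule inj_on_inverseI[where g = \<psi>]) (rule inverse')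
  have span: "aff_span Q = \<phi> ` aff_span P"
    using aff_span_image[OF affine_on_subset[OF affine aff_span_superset]
        inj_on_subset[OF inj aff_span_superset]]
    unfolding image .
  have "\<phi> ` (aff_span P \<inter> int_points) = aff_span Q \<inter> int_points"
  proof
    show "\<phi> ` (aff_span P \<inter> int_points) \<subseteq> aff_span Q \<inter> int_points"
      unfolding span using integral(1) by auto
    show "aff_span Q \<inter> int_points \<subseteq> \<phi> ` (aff_span P \<inter> int_points)"
    proof
      fix y assume y: "y \<in> aff_span Q \<inter> int_points"
      then obtain x where x: "x \<in> aff_span P" "y = \<phi> x" unfolding span by blast
      have "x = \<psi> y" using inverse'[OF x(1)] x(2) by simp
      then have "x \<in> int_points" using y integral(2) by auto
      then show "y \<in> \<phi> ` (aff_span P \<inter> int_points)" using x by blast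
    qed
  qed
  moreover have "bij_betw \<phi> (aff_span P) (aff_span Q)"
    unfolding bij_betw_def using inj span by simp
  ultimately show ?thesis
    unfolding integral_affinely_equivalent_def using affine image by blast
qed

definition coordinate_map ::
  "'b set \<Rightarrow> ('b \<Rightarrow> real) \<Rightarrow> ('b \<Rightarrow> real) \<Rightarrow> ('b \<Rightarrow> 'a) \<Rightarrow> ('a \<Rightarrow> real) \<Rightarrow> 'b \<Rightarrow> real" where
  "coordinate_map N \<alpha> \<beta> \<sigma> x n = (if n \<in> N then \<alpha> n + \<beta> n * x (\<sigma> n) else 0)"

lemma affine_on_coordinate_map: "affine_on S (coordinate_map N \<alpha> \<beta> \<sigma>)"
  unfolding affine_on_def
proof (intro allI impI ext)
  fix T and c :: "_ \<Rightarrow> real" and n assume T: "finite T \<and> T \<subseteq> S \<and> sum c T = 1"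
  have "\<alpha> n = (\<Sum>x\<in>T. c x * \<alpha> n)" using T by (simp add: sum_distrib_right[symmetric])
  then show "coordinate_map N \<alpha> \<beta> \<sigma> (\<lambda>a. \<Sum>x\<in>T. c x * x a) n
      = (\<Sum>x\<in>T. c x * coordinate_map N \<alpha> \<beta> \<sigma> x n)"
    by (simp add: coordinate_map_def algebra_simps sum.distrib sum_distrib_left)
qed

lemma coordinate_map_int_points:
  assumes "\<And>n. n \<in> N \<Longrightarrow> \<alpha> n \<in> \<int> \<and> \<beta> n \<in> \<int>"
  shows "coordinate_map N \<alpha> \<beta> \<sigma> ` int_points \<subseteq> int_points"
  using assms unfolding int_points_def coordinate_map_def by auto

lemma integral_affinely_equivalent_coordinate_mapI:
  assumes \<phi>: "\<phi> = coordinate_map N \<alpha> \<beta> \<sigma>" and \<psi>: "\<psi> = coordinate_map A \<gamma> \<delta> \<tau>"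
    and vanishing: "P \<subseteq> {x. \<forall>a. a \<notin> A \<longrightarrow> x a = 0}"
    and inverse: "\<And>x. \<forall>a. a \<notin> A \<longrightarrow> x a = 0 \<Longrightarrow> \<psi> (\<phi> x) = x"
    and membership: "\<And>x. \<forall>a. a \<notin> A \<longrightarrow> x a = 0 \<Longrightarrow> \<phi> x \<in> Q \<longleftrightarrow> x \<in> P"
    and surjective: "\<And>y. y \<in> Q \<Longrightarrow> \<phi> (\<psi> y) = y"
    and "\<And>n. n \<in> N \<Longrightarrow> \<alpha> n \<in> \<int> \<and> \<beta> n \<in> \<int>" "\<And>a. a \<in> A \<Longrightarrow> \<gamma> a \<in> \<int> \<and> \<delta> a \<in> \<int>"
  shows "integral_affinely_equivalent P Q"
proof (rule integral_affinely_equivalentI[where \<phi> = \<phi> and \<psi> = \<psi>, OF _ vanishing inverse])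
  show "affine_on (aff_span P) \<phi>"
    unfolding \<phi> by (rule affine_on_coordinate_map)
  show "\<phi> ` int_points \<subseteq> int_points"
    unfolding \<phi> using assms(7) by (rule coordinate_map_int_points)
  show "\<psi> ` int_points \<subseteq> int_points"
    unfolding \<psi> using assms(8) by (rule coordinate_map_int_points)
  show "\<phi> ` P = Q"
  proof
    show "\<phi> ` P \<subseteq> Q"
      using membership vanishing by blast
    show "Q \<subseteq> \<phi> ` P"
    proof
      fix y assume y: "y \<in> Q"
      have "\<forall>a. a \<notin> A \<longrightarrow> \<psi> y a = 0"
        unfolding \<psi> coordinate_map_def by simp
      then have "\<psi> y \<in> P" using membership surjective[OF y] y by metis
      then show "y \<in> \<phi> ` P" using surjective[OF y] by (metis image_eqI)
    qed
  qed
qed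

lemma ball_Plus_iff: "(\<forall>e\<in>A <+> B. P e) \<longleftrightarrow> (\<forall>a\<in>A. P (Inl a)) \<and> (\<forall>b\<in>B. P (Inr b))"
  by auto

(* Vertices Inl v are those of Q and Inr a is the vertex subdividing the arrow a;
   the arrow Inl a leads to the head of a and Inr a to its tail. *)
fun subdivision_source :: "'a + 'a \<Rightarrow> 'v + 'a" where
  "subdivision_source (Inl a) = Inr a"
| "subdivision_source (Inr a) = Inr a"

fun subdivision_target :: "('a \<Rightarrow> 'v) \<Rightarrow> ('a \<Rightarrow> 'v) \<Rightarrow> 'a + 'a \<Rightarrow> 'v + 'a" where
  "subdivision_target s t (Inl a) = Inl (t a)"
| "subdivision_target s t (Inr a) = Inl (s a)"

fun subdivision_weight ::
  "'a set \<Rightarrow> ('a \<Rightarrow> 'v) \<Rightarrow> ('a \<Rightarrow> 'v) \<Rightarrow> ('v \<Rightarrow> int) \<Rightarrow> ('a \<Rightarrow> int) \<Rightarrow> ('a \<Rightarrow> int) \<Rightarrow> 'v + 'a \<Rightarrow> int"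
where
  "subdivision_weight A s t \<theta> l u (Inl v) = \<theta> v - (\<Sum>a\<in>{a\<in>A. t a = v}. l a) + (\<Sum>a\<in>{a\<in>A. s a = v}. u a)"
| "subdivision_weight A s t \<theta> l u (Inr a) = l a - u a"

lemma subdivision_balance_Inl:
  fixes y :: "'a + 'a \<Rightarrow> real"
  assumes "finite A"
  shows "(\<Sum>e\<in>{e\<in>A <+> A. subdivision_target s t e = Inl v}. y e)
      - (\<Sum>e\<in>{e\<in>A <+> A. subdivision_source e = (Inl v :: 'v + 'a)}. y e)
    = (\<Sum>a\<in>{a\<in>A. t a = v}. y (Inl a)) + (\<Sum>a\<in>{a\<in>A. s a = v}. y (Inr a))"
proof -
  have targets: "{e\<in>A <+> A. subdivision_target s t e = Inl v} = {a\<in>A. t a = v} <+> {a\<in>A. s a = v}"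
    by auto
  have sources: "{e\<in>A <+> A. subdivision_source e = (Inl v :: 'v + 'a)} = {}"
    by auto
  show ?thesis
    unfolding targets sources using assms by (simp add: sum.Plus)
qed

lemma subdivision_balance_Inr:
  fixes y :: "'a + 'a \<Rightarrow> real"
  assumes "a \<in> A"
  shows "(\<Sum>e\<in>{e\<in>A <+> A. subdivision_target s t e = (Inr a :: 'v + 'a)}. y e)
      - (\<Sum>e\<in>{e\<in>A <+> A. subdivision_source e = Inr a}. y e)
    = - (y (Inl a) + y (Inr a))"
proof -
  have targets: "{e\<in>A <+> A. subdivision_target s t e = (Inr a :: 'v + 'a)} = {}"
    by auto
  have sources: "{e\<in>A <+> A. subdivision_source e = Inr a} = {Inl a, Inr a}"
    using assms by auto
  show ?thesis
    unfolding targets sources by simp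
qed

definition subdivision_flow :: "'a set \<Rightarrow> ('a \<Rightarrow> int) \<Rightarrow> ('a \<Rightarrow> int) \<Rightarrow> ('a \<Rightarrow> real) \<Rightarrow> 'a + 'a \<Rightarrow> real"
  where "subdivision_flow A l u = coordinate_map (A <+> A)
    (case_sum (\<lambda>a. - of_int (l a)) (\<lambda>a. of_int (u a))) (case_sum (\<lambda>_. 1) (\<lambda>_. - 1)) (case_sum id id)"

lemma subdivision_flow_Inl: "a \<in> A \<Longrightarrow> subdivision_flow A l u x (Inl a) = x a - l a"
  and subdivision_flow_Inr: "a \<in> A \<Longrightarrow> subdivision_flow A l u x (Inr a) = u a - x a"
  and subdivision_flow_outside: "e \<notin> A <+> A \<Longrightarrow> subdivision_flow A l u x e = 0"
  by (auto simp: subdivision_flow_def coordinate_map_def)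

lemma subdivision_flow_balance_Inl:
  assumes "finite A"
  shows "real_of_int (subdivision_weight A s t \<theta> l u (Inl v))
      = (\<Sum>e\<in>{e\<in>A <+> A. subdivision_target s t e = Inl v}. subdivision_flow A l u x e)
      - (\<Sum>e\<in>{e\<in>A <+> A. subdivision_source e = Inl v}. subdivision_flow A l u x e)
    \<longleftrightarrow> real_of_int (\<theta> v) = (\<Sum>a\<in>{a\<in>A. t a = v}. x a) - (\<Sum>a\<in>{a\<in>A. s a = v}. x a)"
proof -
  have "(\<Sum>a\<in>{a\<in>A. t a = v}. subdivision_flow A l u x (Inl a)) = (\<Sum>a\<in>{a\<in>A. t a = v}. x a - l a)"
    "(\<Sum>a\<in>{a\<in>A. s a = v}. subdivision_flow A l u x (Inr a)) = (\<Sum>a\<in>{a\<in>A. s a = v}. u a - x a)"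
    by (auto intro: sum.cong simp: subdivision_flow_Inl subdivision_flow_Inr)
  then show ?thesis
    unfolding subdivision_balance_Inl[OF assms] by (auto simp: sum_subtractf of_int_sum)
qed

lemma subdivision_flow_mem_iff:
  assumes "finite A" and "\<forall>a. a \<notin> A \<longrightarrow> x a = 0"
  shows "subdivision_flow A l u x \<in> quiver_polytope (V <+> A) (A <+> A) subdivision_source
      (subdivision_target s t) (subdivision_weight A s t \<theta> l u)
    \<longleftrightarrow> x \<in> flow_polytope V A s t \<theta> l u"
proof -
  have nonneg: "(\<forall>e\<in>A <+> A. 0 \<le> subdivision_flow A l u x e) \<longleftrightarrow> (\<forall>a\<in>A. l a \<le> x a \<and> x a \<le> u a)"
    by (auto simp: ball_Plus_iff subdivision_flow_Inl subdivision_flow_Inr)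
  have "\<forall>a\<in>A. real_of_int (subdivision_weight A s t \<theta> l u (Inr a))
      = (\<Sum>e\<in>{e\<in>A <+> A. subdivision_target s t e = Inr a}. subdivision_flow A l u x e)
      - (\<Sum>e\<in>{e\<in>A <+> A. subdivision_source e = Inr a}. subdivision_flow A l u x e)"
    by (simp add: subdivision_balance_Inr subdivision_flow_Inl subdivision_flow_Inr)
  then have weights: "(\<forall>w\<in>V <+> A. real_of_int (subdivision_weight A s t \<theta> l u w)
      = (\<Sum>e\<in>{e\<in>A <+> A. subdivision_target s t e = w}. subdivision_flow A l u x e)
      - (\<Sum>e\<in>{e\<in>A <+> A. subdivision_source e = w}. subdivision_flow A l u x e))
    \<longleftrightarrow> (\<forall>v\<in>V. real_of_int (\<theta> v) = (\<Sum>a\<in>{a\<in>A. t a = v}. x a) - (\<Sum>a\<in>{a\<in>A. s a = v}. x a))"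
    unfolding ball_Plus_iff subdivision_flow_balance_Inl[OF assms(1)] by blast
  have outside: "\<forall>e. e \<notin> A <+> A \<longrightarrow> subdivision_flow A l u x e = 0"
    by (simp add: subdivision_flow_outside)
  show ?thesis
    unfolding quiver_polytope_def flow_polytope_def mem_Collect_eq nonneg weights
    using assms(2) outside by blast
qed

lemma subdivision_flow_surj:
  assumes y: "y \<in> quiver_polytope (V <+> A) (A <+> A) subdivision_source
      (subdivision_target s t) (subdivision_weight A s t \<theta> l u)"
  shows "subdivision_flow A l u (coordinate_map A (\<lambda>a. of_int (l a)) (\<lambda>_. 1) Inl y) = y"
proof
  fix e show "subdivision_flow A l u (coordinate_map A (\<lambda>a. of_int (l a)) (\<lambda>_. 1) Inl y) e = y e"
  proof (cases "e \<in> A <+> A")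
    case True
    then obtain a where "a \<in> A" and "e = Inl a \<or> e = Inr a" by blast
    moreover have "real_of_int (l a - u a) = - (y (Inl a) + y (Inr a))" if "a \<in> A"
      using that y subdivision_balance_Inr[OF that, where s = s and t = t and y = y]
      unfolding quiver_polytope_def by (auto simp: ball_Plus_iff)
    ultimately show ?thesis
      by (auto simp: subdivision_flow_Inl subdivision_flow_Inr coordinate_map_def)
  next
    case False
    then show ?thesis
      using y subdivision_flow_outside by (simp add: quiver_polytope_def)
  qed
qed

lemma flow_polytope_subdivision:
  fixes V :: "'v set" and A :: "'a set" and s t :: "'a \<Rightarrow> 'v"
  assumes "finite A"
  shows "integral_affinely_equivalent (flow_polytope V A s t \<theta> l u)
    (quiver_polytope (V <+> A) (A <+> A) subdivision_source (subdivision_target s t)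
      (subdivision_weight A s t \<theta> l u))"
proof (rule integral_affinely_equivalent_coordinate_mapI[OF subdivision_flow_def refl])
  show "flow_polytope V A s t \<theta> l u \<subseteq> {x. \<forall>a. a \<notin> A \<longrightarrow> x a = 0}"
    unfolding flow_polytope_def by blast
  show "coordinate_map A (\<lambda>a. of_int (l a)) (\<lambda>_. 1) Inl (subdivision_flow A l u x) = x"
    if "\<forall>a. a \<notin> A \<longrightarrow> x a = 0" for x
    using that by (intro ext) (auto simp: coordinate_map_def subdivision_flow_Inl)
qed (auto simp: subdivision_flow_mem_iff[OF assms] subdivision_flow_surj split: sum.split)

lemma sum_relabelled_arrows:
  assumes "inj_on f V" "inj_on g A" "\<forall>a\<in>A. h a \<in> V" "v \<in> V"
  shows "(\<Sum>n\<in>{n\<in>g ` A. f (h (inv_into A g n)) = f v}. y n) = (\<Sum>a\<in>{a\<in>A. h a = v}. y (g a))"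
proof -
  have "{n\<in>g ` A. f (h (inv_into A g n)) = f v} = g ` {a\<in>A. h a = v}"
    using assms by (auto simp: inj_on_eq_iff)
  moreover have "inj_on g {a\<in>A. h a = v}"
    using assms(2) by (rule inj_on_subset) blast
  ultimately show ?thesis
    by (simp add: sum.reindex)
qed

lemma quiver_polytope_relabel:
  fixes f :: "'v \<Rightarrow> 'w" and g :: "'a \<Rightarrow> 'b"
  assumes endpoints: "\<forall>a\<in>A. s a \<in> V \<and> t a \<in> V" and f: "inj_on f V" and g: "inj_on g A"
  shows "integral_affinely_equivalent (quiver_polytope V A s t \<theta>)
    (quiver_polytope (f ` V) (g ` A) (f \<circ> s \<circ> inv_into A g) (f \<circ> t \<circ> inv_into A g) (\<theta> \<circ> inv_into V f))"
    (is "integral_affinely_equivalent ?P ?Q")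
proof -
  define \<phi> :: "('a \<Rightarrow> real) \<Rightarrow> 'b \<Rightarrow> real" where "\<phi> = coordinate_map (g ` A) (\<lambda>_. 0) (\<lambda>_. 1) (inv_into A g)"
  define \<psi> :: "('b \<Rightarrow> real) \<Rightarrow> 'a \<Rightarrow> real" where "\<psi> = coordinate_map A (\<lambda>_. 0) (\<lambda>_. 1) g"
  have \<phi>_outside: "\<phi> x n = 0" if "n \<notin> g ` A" for x n
    using that by (simp add: \<phi>_def coordinate_map_def)
  have \<phi>_g: "\<phi> x (g a) = x a" if "a \<in> A" for x a
    using that g by (simp add: \<phi>_def coordinate_map_def)
  have balance: "(\<Sum>n\<in>{n\<in>g ` A. f (h (inv_into A g n)) = f v}. \<phi> x n) = (\<Sum>a\<in>{a\<in>A. h a = v}. x a)"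
    if "\<forall>a\<in>A. h a \<in> V" "v \<in> V" for h v x
    unfolding sum_relabelled_arrows[OF f g that] by (rule sum.cong) (auto simp: \<phi>_g)
  have membership: "\<phi> x \<in> ?Q \<longleftrightarrow> x \<in> ?P" if x: "\<forall>a. a \<notin> A \<longrightarrow> x a = 0" for x
  proof -
    have weights: "(\<forall>w\<in>f ` V. real_of_int ((\<theta> \<circ> inv_into V f) w)
        = (\<Sum>n\<in>{n\<in>g ` A. (f \<circ> t \<circ> inv_into A g) n = w}. \<phi> x n)
        - (\<Sum>n\<in>{n\<in>g ` A. (f \<circ> s \<circ> inv_into A g) n = w}. \<phi> x n))
      \<longleftrightarrow> (\<forall>v\<in>V. real_of_int (\<theta> v) = (\<Sum>a\<in>{a\<in>A. t a = v}. x a) - (\<Sum>a\<in>{a\<in>A. s a = v}. x a))"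
      using endpoints f by (simp add: balance)
    have nonneg: "(\<forall>n\<in>g ` A. 0 \<le> \<phi> x n) \<longleftrightarrow> (\<forall>a\<in>A. 0 \<le> x a)"
      by (simp add: \<phi>_g)
    have outside: "\<forall>n. n \<notin> g ` A \<longrightarrow> \<phi> x n = 0"
      by (simp add: \<phi>_outside)
    show ?thesis
      unfolding quiver_polytope_def mem_Collect_eq weights nonneg using x outside by blast
  qed
  show ?thesis
  proof (rule integral_affinely_equivalent_coordinate_mapI[OF \<phi>_def \<psi>_def _ _ membership])
    show "?P \<subseteq> {x. \<forall>a. a \<notin> A \<longrightarrow> x a = 0}"
      unfolding quiver_polytope_def by blast
    show "\<psi> (\<phi> x) = x" if "\<forall>a. a \<notin> A \<longrightarrow> x a = 0" for x
      using that by (intro ext) (auto simp: \<psi>_def coordinate_map_def \<phi>_g)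
    show "\<phi> (\<psi> y) = y" if y: "y \<in> ?Q" for y
    proof
      fix n show "\<phi> (\<psi> y) n = y n"
      proof (cases "n \<in> g ` A")
        case True
        then show ?thesis by (auto simp: \<phi>_g \<psi>_def coordinate_map_def)
      next
        case False
        moreover have "\<forall>n. n \<notin> g ` A \<longrightarrow> y n = 0"
          using y unfolding quiver_polytope_def by blast
        ultimately show ?thesis by (simp add: \<phi>_outside)
      qed
    qed
  qed simp_all
qed

lemma quiver_subdivision:
  "quiver V A s t \<Longrightarrow> quiver (V <+> A) (A <+> A) subdivision_source (subdivision_target s t)"
  unfolding quiver_def by auto

lemma quiver_relabel:
  "quiver V A s t \<Longrightarrow> inj_on g A
    \<Longrightarrow> quiver (f ` V) (g ` A) (f \<circ> s \<circ> inv_into A g) (f \<circ> t \<circ> inv_into A g)"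
  unfolding quiver_def by auto

lemma no_oriented_cycles_if_sources_disjoint_targets:
  assumes "s ` A \<inter> t ` A = {}"
  shows "no_oriented_cycles A s t"
  unfolding no_oriented_cycles_def
proof (rule acyclicI_order)
  fix x y assume "(x, y) \<in> {(s a, t a) |a. a \<in> A}"
  with assms show "of_bool (y \<in> s ` A) < (of_bool (x \<in> s ` A) :: nat)"
    by auto
qed

lemma subdivision_sources_disjoint_targets:
  "subdivision_source ` B \<inter> subdivision_target s t ` B = {}"
  by (auto elim!: subdivision_source.elims subdivision_target.elims)

lemma relabel_sources_disjoint_targets:
  assumes "quiver V A s t" "inj_on f V" "inj_on g A" "s ` A \<inter> t ` A = {}"
  shows "(f \<circ> s \<circ> inv_into A g) ` g ` A \<inter> (f \<circ> t \<circ> inv_into A g) ` g ` A = {}"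
proof -
  have "(f \<circ> h \<circ> inv_into A g) ` g ` A = f ` h ` A" for h
    using assms(3) by (force simp: image_comp)
  moreover have "f ` s ` A \<inter> f ` t ` A = f ` (s ` A \<inter> t ` A)"
    using assms(1,2) unfolding quiver_def by (intro inj_on_image_Int[symmetric]) auto
  ultimately show ?thesis
    using assms(4) by simp
qed

theorem proposition2p2:
  fixes V :: "'v set" and A :: "'a set" and s t :: "'a \<Rightarrow> 'v"
    and \<theta> :: "'v \<Rightarrow> int" and l u :: "'a \<Rightarrow> int"
  assumes "quiver V A s t"
    and "\<forall>a\<in>A. 0 \<le> l a" and "\<forall>a\<in>A. 0 \<le> u a"
  shows "\<exists>(V' :: nat set) (A' :: nat set) (s' :: nat \<Rightarrow> nat) (t' :: nat \<Rightarrow> nat) (\<theta>' :: nat \<Rightarrow> int).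
           quiver V' A' s' t' \<and> no_oriented_cycles A' s' t'
         \<and> integral_affinely_equivalent (flow_polytope V A s t \<theta> l u) (quiver_polytope V' A' s' t' \<theta>')"
proof -
  let ?s = "subdivision_source :: 'a + 'a \<Rightarrow> 'v + 'a" and ?t = "subdivision_target s t"
  have subdivision: "quiver (V <+> A) (A <+> A) ?s ?t"
    using assms(1) by (rule quiver_subdivision)
  then obtain f :: "'v + 'a \<Rightarrow> nat" and g :: "'a + 'a \<Rightarrow> nat"
    where f: "inj_on f (V <+> A)" and g: "inj_on g (A <+> A)"
    unfolding quiver_def by (metis finite_imp_inj_to_nat_seg)
  have "integral_affinely_equivalent (flow_polytope V A s t \<theta> l u)
      (quiver_polytope (V <+> A) (A <+> A) ?s ?t (subdivision_weight A s t \<theta> l u))"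
    using assms(1) unfolding quiver_def by (intro flow_polytope_subdivision) simp
  moreover have "integral_affinely_equivalent
      (quiver_polytope (V <+> A) (A <+> A) ?s ?t (subdivision_weight A s t \<theta> l u))
      (quiver_polytope (f ` (V <+> A)) (g ` (A <+> A))
      (f \<circ> ?s \<circ> inv_into (A <+> A) g) (f \<circ> ?t \<circ> inv_into (A <+> A) g)
      (subdivision_weight A s t \<theta> l u \<circ> inv_into (V <+> A) f))"
    using subdivision f g unfolding quiver_def by (intro quiver_polytope_relabel) simp_all
  moreover have "quiver (f ` (V <+> A)) (g ` (A <+> A)) (f \<circ> ?s \<circ> inv_into (A <+> A) g) (f \<circ> ?t \<circ> inv_into (A <+> A) g)"
    using subdivision g by (rule quiver_relabel)
  moreover have "no_oriented_cycles (g ` (A <+> A)) (f \<circ> ?s \<circ> inv_into (A <+> A) g) (f \<circ> ?t \<circ> inv_into (A <+> A) g)"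
    using relabel_sources_disjoint_targets[OF subdivision f g subdivision_sources_disjoint_targets]
    by (rule no_oriented_cycles_if_sources_disjoint_targets)
  ultimately show ?thesis
    by (blast intro: integral_affinely_equivalent_trans)
qed

end
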